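(* Let $A,B,C\in\mathbb{C}$ be the vertices of a nondegenerate counterclockwise triangle. Define $$P_1=A+\rho(C-A),\qquad P_2=A+\rho^{-1}(B-A),$$ $$X=P_2+\rho^{-1}(A-P_2),\qquad Y=P_2+\rho(P_1-P_2).$$ Let $M=(B+C)/2$. Let $\Gamma$ be the circumcircle of the equilateral triangle with side $BM$ whose third vertex lies on the same side of line $BC$ as $A$. Let $\sigma$ be the signed area of the ordered triangle $F_2=(P_2,Y,X)$, positive for counterclockwise. Then: - $\sigma>0$ if $A$ lies outside $\Gamma$; - $\sigma=0$ (the three vertices of $F_2$ are collinear) if $A$ lies on $\Gamma$; - $\sigma<0$ if $A$ lies inside $\Gamma$.
   Context: The plane is identified with $\mathbb{C}$, and $\rho=e^{2\pi i/3}$. Geometric meaning of the construction: - $H_1$ is the regular hexagon erected outwardly on $AC$, and $H_2$ the one erected outwardly on $AB$. - $P_1$ and $P_2$ are the vertices adjacent to $A$, other than $C$ resp. $B$, of $H_1$ resp. $H_2$. - $F_1=(A,P_1,P_2)$ is the flank triangle between $H_1$ and $H_2$. - $X$ is the vertex of $H_2$ adjacent to $P_2$ other than $A$. - $Y$ is the vertex adjacent to $P_2$, other than $P_1$, of the regular hexagon $H_3$ erected on the side $P_1P_2$ of $F_1$. - $F_2$ is the flank triangle between $H_2$ and $H_3$. *)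

theory Defs
  imports Complex_Main
begin

definition rho :: complex where
  "rho = cis (2 * pi / 3)"

definition signed_area :: "complex \<Rightarrow> complex \<Rightarrow> complex \<Rightarrow> real" where
  "signed_area p q r = Im (cnj (q - p) * (r - p)) / 2"

definition same_side :: "complex \<Rightarrow> complex \<Rightarrow> complex \<Rightarrow> complex \<Rightarrow> bool" where
  "same_side p q x y \<longleftrightarrow> signed_area p q x * signed_area p q y > 0"

end

theory Submission
  imports Defs
begin

text \<open>The third vertex of the equilateral triangle on \<open>BM\<close> is \<open>T = B + \<omega>(M - B)\<close> with
  \<open>\<omega> = cis (\<pi>/3)\<close>, so the centre of \<open>\<Gamma>\<close> is the centroid \<open>Z = B + (1 + \<omega>)(C - B)/6\<close>.
  Expanding in coordinates gives \<open>2\<sigma> = \<surd>3 (|A - Z|\<^sup>2 - |Z - B|\<^sup>2)\<close>: the signed area of \<open>F\<^sub>2\<close>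
  is a positive multiple of the power of \<open>A\<close> with respect to \<open>\<Gamma>\<close>.\<close>

lemma rho_eq: "rho = Complex (-1/2) (sqrt 3 / 2)"
  by (simp add: rho_def cis.ctr cos_120 sin_120)

lemma inverse_rho: "inverse rho = cnj rho"
  by (simp add: rho_eq inverse_complex.ctr power2_eq_square complex_eq_iff)

lemma cis_pi_third: "cis (pi / 3) = Complex (1/2) (sqrt 3 / 2)"
  by (simp add: cis.ctr cos_60 sin_60)

lemma signed_area_rotate: "signed_area p q r = signed_area q r p"
  unfolding signed_area_def by (simp add: algebra_simps)

lemma dist_eq_imp_orthogonal:
  fixes P Q Z G :: complex
  assumes "dist Z P = dist Z Q" "dist G P = dist G Q"
  shows "Re (cnj (Q - P) * (Z - G)) = 0"
proof -
  have "(cmod (Z - P))\<^sup>2 - (cmod (Z - Q))\<^sup>2 - ((cmod (G - P))\<^sup>2 - (cmod (G - Q))\<^sup>2)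
        = 2 * Re (cnj (Q - P) * (Z - G))"
    by (simp add: cmod_power2 power2_diff algebra_simps)
  with assms show ?thesis by (simp add: dist_norm)
qed

lemma orthogonal_to_independent_eq_0:
  fixes u v w :: complex
  assumes "Re (cnj u * w) = 0" "Re (cnj v * w) = 0" "Im (cnj u * v) \<noteq> 0"
  shows "w = 0"
proof -
  have "Im (cnj u * v) * Re w = Im v * Re (cnj u * w) - Im u * Re (cnj v * w)"
    by (simp add: algebra_simps)
  also have "\<dots> = 0" using assms(1,2) by simp
  finally have "Re w = 0" using assms(3) by simp
  have "Im (cnj u * v) * Im w = Re u * Re (cnj v * w) - Re v * Re (cnj u * w)"
    by (simp add: algebra_simps)
  also have "\<dots> = 0" using assms(1,2) by simp
  finally have "Im w = 0" using assms(3) by simp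
  with \<open>Re w = 0\<close> show ?thesis by (simp add: complex_eq_iff)
qed

lemma equilateral_apex:
  fixes B M T :: complex
  assumes "dist B T = dist B M" "dist M T = dist B M" "signed_area B M T > 0"
  shows "T = B + cis (pi / 3) * (M - B)"
proof -
  define u where "u = M - B"
  define w where "w = T - B"
  define r where "r = (cmod u)\<^sup>2"
  define p where "p = cnj u * w"
  have w_norm: "(cmod w)\<^sup>2 = r" and wu_norm: "(cmod (w - u))\<^sup>2 = r"
    using assms(1,2) by (simp_all add: r_def u_def w_def dist_norm norm_minus_commute)
  have "(cmod (w - u))\<^sup>2 = (cmod w)\<^sup>2 - 2 * Re p + r"
    by (simp add: p_def r_def cmod_power2 power2_diff algebra_simps)
  then have re: "Re p = r / 2"
    using w_norm wu_norm by simp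
  have im_pos: "Im p > 0"
    using assms(3) by (simp add: signed_area_def p_def u_def w_def)
  have "(Re p)\<^sup>2 + (Im p)\<^sup>2 = (cmod p)\<^sup>2"
    by (simp only: cmod_power2)
  also have "\<dots> = r\<^sup>2"
    using w_norm by (simp add: p_def r_def norm_mult power_mult_distrib)
  finally have "(Im p)\<^sup>2 = (sqrt 3 / 2 * r)\<^sup>2"
    using re by (simp add: power_mult_distrib power_divide)
  then have im: "Im p = sqrt 3 / 2 * r"
    using im_pos r_def by simp
  have "cnj u * w = r * cis (pi / 3)"
    using re im by (simp add: p_def [symmetric] complex_eq_iff cis_pi_third)
  then have "r * w = r * (cis (pi / 3) * u)"
    by (metis (no_types, lifting) complex_norm_square mult.assoc mult.commute r_def)
  moreover have "r \<noteq> 0"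
    using im_pos by (auto simp: r_def p_def)
  ultimately have "w = cis (pi / 3) * u"
    by simp
  then show ?thesis
    by (simp add: u_def w_def algebra_simps)
qed

lemma circumcentre_equilateral:
  fixes B M T Z :: complex
  assumes "dist Z B = dist Z M" "dist Z B = dist Z T"
    and T: "T = B + cis (pi / 3) * (M - B)" and "M \<noteq> B"
  shows "Z = B + (1 + cis (pi / 3)) / 3 * (M - B)"
proof -
  define c where "c = (1 + cis (pi / 3)) / 3"
  define G where "G = B + c * (M - B)"
  have "cmod c = cmod (c - 1)" "cmod c = cmod (c - cis (pi / 3))"
    by (simp_all add: c_def cis_pi_third cmod_def power2_eq_square)
  moreover have "G - M = (c - 1) * (M - B)" "G - T = (c - cis (pi / 3)) * (M - B)"
    by (simp_all add: G_def T algebra_simps)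
  ultimately have "dist G B = dist G M" "dist G B = dist G T"
    by (simp_all add: G_def dist_norm norm_mult)
  then have orth: "Re (cnj (M - B) * (Z - G)) = 0" "Re (cnj (T - B) * (Z - G)) = 0"
    using assms(1,2) dist_eq_imp_orthogonal by blast+
  have "cnj (M - B) * (T - B) = cnj (M - B) * (M - B) * cis (pi / 3)"
    by (simp add: T ac_simps)
  also have "\<dots> = (cmod (M - B))\<^sup>2 * cis (pi / 3)"
    by (metis complex_norm_square mult.commute)
  finally have "Im (cnj (M - B) * (T - B)) \<noteq> 0"
    using assms(4) by (simp add: cis_pi_third)
  with orth have "Z - G = 0"
    by (rule orthogonal_to_independent_eq_0)
  then show ?thesis
    by (simp add: G_def c_def)
qed

lemma flank_signed_area:
  fixes A B C :: complex
  assumes "P1 = A + rho * (C - A)" "P2 = A + inverse rho * (B - A)"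
    and "X = P2 + inverse rho * (A - P2)" "Y = P2 + rho * (P1 - P2)"
    and "Z = B + (1 + cis (pi / 3)) / 6 * (C - B)"
  shows "2 * signed_area P2 Y X = sqrt 3 * ((cmod (A - Z))\<^sup>2 - (cmod (Z - B))\<^sup>2)"
proof -
  have sqrt3_sqrt3: "sqrt 3 * (sqrt 3 * x) = 3 * x" for x :: real
    by (simp flip: mult.assoc)
  show ?thesis
    unfolding assms signed_area_def inverse_rho rho_eq cis_pi_third cmod_power2
    by (simp add: algebra_simps power2_eq_square sqrt3_sqrt3) (simp add: field_simps)
qed

lemma centre_of_equilateral_on_half_side:
  fixes B C T Z :: complex
  assumes "signed_area B C T > 0"
    and "dist B T = dist B ((B + C) / 2)" "dist ((B + C) / 2) T = dist B ((B + C) / 2)"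
    and "dist Z B = dist Z ((B + C) / 2)" "dist Z B = dist Z T"
  shows "Z = B + (1 + cis (pi / 3)) / 6 * (C - B)"
proof -
  define M where "M = (B + C) / 2"
  have T_left: "signed_area B M T > 0"
    using assms(1) by (simp add: M_def signed_area_def field_simps)
  then have T: "T = B + cis (pi / 3) * (M - B)"
    using assms(2,3) by (intro equilateral_apex) (simp_all add: M_def)
  have "M \<noteq> B"
    using T_left by (auto simp: signed_area_def)
  then have "Z = B + (1 + cis (pi / 3)) / 3 * (M - B)"
    using assms(4,5) T by (intro circumcentre_equilateral) (simp_all add: M_def)
  then show ?thesis
    by (simp add: M_def field_simps)
qed

theorem mainTheorem3:
  fixes A B C T Z :: complex
  assumes ccw: "signed_area A B C > 0"
    and T_eq: "dist B T = dist B ((B + C) / 2)" "dist ((B + C) / 2) T = dist B ((B + C) / 2)"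
    and T_side: "same_side B C T A"
    and O_circ: "dist Z B = dist Z ((B + C) / 2)" "dist Z B = dist Z T"
  shows "let P1 = A + rho * (C - A); P2 = A + inverse rho * (B - A);
             X = P2 + inverse rho * (A - P2); Y = P2 + rho * (P1 - P2);
             s = signed_area P2 Y X
         in (dist A Z > dist Z B \<longrightarrow> s > 0) \<and>
            (dist A Z = dist Z B \<longrightarrow> s = 0) \<and>
            (dist A Z < dist Z B \<longrightarrow> s < 0)"
proof -
  have "signed_area B C A > 0"
    using ccw signed_area_rotate[of A B C] by simp
  then have "signed_area B C T > 0"
    using T_side by (simp add: same_side_def zero_less_mult_iff)
  then have Z: "Z = B + (1 + cis (pi / 3)) / 6 * (C - B)"
    using T_eq O_circ by (rule centre_of_equilateral_on_half_side)
  define s where "s = signed_area (A + inverse rho * (B - A))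
           (A + inverse rho * (B - A) + rho * (A + rho * (C - A) - (A + inverse rho * (B - A))))
           (A + inverse rho * (B - A) + inverse rho * (A - (A + inverse rho * (B - A))))"
  have "2 * s = sqrt 3 * ((dist A Z)\<^sup>2 - (dist Z B)\<^sup>2)"
    unfolding s_def dist_norm by (rule flank_signed_area[OF refl refl refl refl Z])
  then have s_eq: "s = sqrt 3 / 2 * (dist A Z + dist Z B) * (dist A Z - dist Z B)"
    by (simp add: power2_eq_square algebra_simps)
  have "dist A Z + dist Z B > 0" if "dist A Z \<noteq> dist Z B"
    using that zero_le_dist[of A Z] zero_le_dist[of Z B] by linarith
  then show ?thesis
    unfolding Let_def s_def [symmetric] s_eq
    by (auto simp: zero_less_mult_iff mult_less_0_iff)
qed

end
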